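(* Let $p$ be a prime, $m\ge1$, $n\ge1$ and $0\le k<n$ integers. The number of $[[n,k]]_{p^m}$ stabilizer codes is $$N(n,k,p^m)=\left(p^{m-1}\right)^{\frac{(n-k)(n+3k+1)}{2}}\begin{bmatrix} n\\ n-k\end{bmatrix}_p\prod_{j=0}^{n-k-1}\left(p^{n-j}+1\right),\qquad \begin{bmatrix} n\\ n-k\end{bmatrix}_p:=\prod_{j=0}^{n-k-1}\frac{p^{n-j}-1}{p^{n-k-j}-1}.$$
   Context: Qudits have dimension $d=p^m$ with configuration space $\mathbb{Z}_{p^m}$ (integers modulo $p^m$, not the Galois field). $\Lambda=\begin{pmatrix}0&I_n\\-I_n&0\end{pmatrix}$. On $\mathbb{C}^d$ with basis $\{|j\rangle\}_{j\in\mathbb{Z}_d}$, $X|j\rangle=|j+1\rangle$, $Z|j\rangle=\omega^j|j\rangle$, $\omega=e^{2\pi i/d}$; the $n$-qudit Pauli group is generated by the $X_j,Z_j$ (and $e^{\pi i/d}I$ if $d$ is even); every Pauli is a phase times $g(a)=X^{u_1}Z^{v_1}\otimes\cdots\otimes X^{u_n}Z^{v_n}$, $a=(u,v)\in\mathbb{Z}_d^{2n}$, and $g(a),g(b)$ commute iff $a^T\Lambda b=0$. An $[[n,k]]_d$ stabilizer group is $S=\langle g_1,\dots,g_{n-k}\rangle$ of pairwise commuting Paulis each having eigenvalue $+1$, with $|S|=d^{n-k}$; its check matrix is $H=[a_1|\cdots|a_{n-k}]$ where $g_j$ is a phase times $g(a_j)$ (the $a_j$ are linearly independent over $\mathbb{Z}_d$,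 i.e. $\sum x_ja_j=0\Rightarrow$ all $x_j=0$). Two stabilizer groups define the same $[[n,k]]_d$ stabilizer code iff their check matrices satisfy $H'=HA$ with $A\in\mathrm{GL}(n-k,\mathbb{Z}_d)$; equivalently a code is the subgroup of $\mathbb{Z}_d^{2n}$ spanned by $n-k$ linearly independent, pairwise symplectically orthogonal ($a_i^T\Lambda a_j=0$) vectors. *)

theory Defs
  imports Complex_Main "HOL-Computational_Algebra.Primes"
begin

text \<open>Vectors of Z_d^{2n} are modelled as functions nat => int with entries in
  {0..<d} at indices < 2n (index i < n: the X-part u_(i+1); index n+i: the Z-part v_(i+1))
  and 0 elsewhere.\<close>

definition zvecs :: "nat \<Rightarrow> nat \<Rightarrow> (nat \<Rightarrow> int) set" where
  "zvecs d n = {v. (\<forall>i<2*n. 0 \<le> v i \<and> v i < int d) \<and> (\<forall>i\<ge>2*n. v i = 0)}"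

definition symp :: "nat \<Rightarrow> (nat \<Rightarrow> int) \<Rightarrow> (nat \<Rightarrow> int) \<Rightarrow> int" where
  "symp n a b = (\<Sum>i<n. a i * b (n + i) - a (n + i) * b i)"

definition lincomb :: "nat \<Rightarrow> nat \<Rightarrow> nat \<Rightarrow> (nat \<Rightarrow> nat \<Rightarrow> int) \<Rightarrow> (nat \<Rightarrow> int) \<Rightarrow> (nat \<Rightarrow> int)" where
  "lincomb d n r a x = (\<lambda>i. if i < 2*n then (\<Sum>j<r. x j * a j i) mod int d else 0)"

definition zspan :: "nat \<Rightarrow> nat \<Rightarrow> nat \<Rightarrow> (nat \<Rightarrow> nat \<Rightarrow> int) \<Rightarrow> (nat \<Rightarrow> int) set" where
  "zspan d n r a = {lincomb d n r a x | x. True}"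

definition lin_indep :: "nat \<Rightarrow> nat \<Rightarrow> nat \<Rightarrow> (nat \<Rightarrow> nat \<Rightarrow> int) \<Rightarrow> bool" where
  "lin_indep d n r a = (\<forall>x. lincomb d n r a x = (\<lambda>_. 0) \<longrightarrow> (\<forall>j<r. x j mod int d = 0))"

definition stab_codes :: "nat \<Rightarrow> nat \<Rightarrow> nat \<Rightarrow> (nat \<Rightarrow> int) set set" where
  "stab_codes d n k = {zspan d n (n - k) a | a.
      (\<forall>j<n-k. a j \<in> zvecs d n) \<and> lin_indep d n (n - k) a \<and>
      (\<forall>i<n-k. \<forall>j<n-k. symp n (a i) (a j) mod int d = 0)}"

definition gauss_binom :: "nat \<Rightarrow> nat \<Rightarrow> nat \<Rightarrow> real" where
  "gauss_binom p n k = (\<Prod>j<n-k. (real p ^ (n - j) - 1) / (real p ^ (n - k - j) - 1))"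

end

(*
  Count ordered generating tuples in two ways.  Write q = p^m.  A tuple (a_0, ..., a_(r-1)) of
  pairwise symplectically orthogonal vectors of Z_q^(2n) that is independent mod p is built one
  vector at a time: once a_0, ..., a_(j-1) are chosen, a_j must lie in the common kernel of the
  functionals b |-> <a_i, b>, which are independent mod p, so this kernel has q^(2n-j) elements;
  exactly p^j (q/p)^(2n-j) of them are congruent mod p to a combination of the a_i and have to
  be discarded.  The same argument without the orthogonality constraint counts the ordered bases
  of Z_q^r.  Over Z_(p^m), independence is the same as independence mod p, and the tuples
  generating a fixed code are exactly the images of one of them under the ordered bases of Z_q^r
  used as coordinate matrices.  Hence the number of codes is the quotient of the two products,
  which simplifies to the stated formula.
*)

theory Submission
  imports Defs "HOL-Number_Theory.Cong" "HOL-Library.FuncSet"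
begin

section \<open>Vectors modulo an integer\<close>

definition padded_funs :: "nat \<Rightarrow> 'a set \<Rightarrow> 'a \<Rightarrow> (nat \<Rightarrow> 'a) set" where
  "padded_funs s A z = {f. (\<forall>i<s. f i \<in> A) \<and> (\<forall>i\<ge>s. f i = z)}"

lemma bij_betw_restrict_padded_funs:
  "bij_betw (\<lambda>f. restrict f {..<s}) (padded_funs s A z) ({..<s} \<rightarrow>\<^sub>E A)"
proof (rule bij_betw_byWitness[where f' = "\<lambda>g i. if i < s then g i else z"])
  show "\<forall>f\<in>padded_funs s A z. (\<lambda>i. if i < s then restrict f {..<s} i else z) = f"
    by (auto simp: padded_funs_def fun_eq_iff)
  show "\<forall>g\<in>{..<s} \<rightarrow>\<^sub>E A. restrict (\<lambda>i. if i < s then g i else z) {..<s} = g"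
    by (auto simp: fun_eq_iff PiE_iff extensional_def)
  show "(\<lambda>f. restrict f {..<s}) ` padded_funs s A z \<subseteq> {..<s} \<rightarrow>\<^sub>E A"
    unfolding padded_funs_def by (rule image_subsetI) (simp add: restrict_PiE_iff)
  show "(\<lambda>g i. if i < s then g i else z) ` ({..<s} \<rightarrow>\<^sub>E A) \<subseteq> padded_funs s A z"
    unfolding padded_funs_def by (rule image_subsetI) (simp add: PiE_iff)
qed

lemma finite_padded_funs: "finite A \<Longrightarrow> finite (padded_funs s A z)"
  by (metis bij_betw_finite bij_betw_restrict_padded_funs finite_PiE finite_lessThan)

lemma card_padded_funs: "finite A \<Longrightarrow> card (padded_funs s A z) = card A ^ s"
  by (metis bij_betw_same_card bij_betw_restrict_padded_funs card_funcsetE card_lessThan finite_lessThan)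

definition vecs :: "int \<Rightarrow> nat \<Rightarrow> (nat \<Rightarrow> int) set" where
  "vecs q N = padded_funs N {0..<q} 0"

lemma vecs_iff: "v \<in> vecs q N \<longleftrightarrow> (\<forall>i<N. 0 \<le> v i \<and> v i < q) \<and> (\<forall>i\<ge>N. v i = 0)"
  by (simp add: vecs_def padded_funs_def)

lemma finite_vecs: "finite (vecs q N)"
  by (simp add: vecs_def finite_padded_funs)

lemma card_vecs: "card (vecs q N) = nat q ^ N"
  by (simp add: vecs_def card_padded_funs)

lemma zvecs_eq_vecs: "zvecs d n = vecs (int d) (2*n)"
  by (auto simp: zvecs_def vecs_iff)

definition vec_mod :: "int \<Rightarrow> nat \<Rightarrow> (nat \<Rightarrow> int) \<Rightarrow> (nat \<Rightarrow> int)" where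
  "vec_mod q N v = (\<lambda>l. if l < N then v l mod q else 0)"

definition dot :: "nat \<Rightarrow> (nat \<Rightarrow> int) \<Rightarrow> (nat \<Rightarrow> int) \<Rightarrow> int" where
  "dot N f b = (\<Sum>l<N. f l * b l)"

definition ker_mod :: "int \<Rightarrow> nat \<Rightarrow> nat \<Rightarrow> (nat \<Rightarrow> nat \<Rightarrow> int) \<Rightarrow> (nat \<Rightarrow> int) set" where
  "ker_mod q N t F = {b \<in> vecs q N. \<forall>i<t. dot N (F i) b mod q = 0}"

definition indep_mod :: "int \<Rightarrow> nat \<Rightarrow> nat \<Rightarrow> (nat \<Rightarrow> nat \<Rightarrow> int) \<Rightarrow> bool" where
  "indep_mod p N s a \<longleftrightarrow>
     (\<forall>c. (\<forall>l<N. (\<Sum>i<s. c i * a i l) mod p = 0) \<longrightarrow> (\<forall>i<s. c i mod p = 0))"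

lemma indep_modD:
  "indep_mod p N s a \<Longrightarrow> \<forall>l<N. (\<Sum>i<s. c i * a i l) mod p = 0 \<Longrightarrow> i < s \<Longrightarrow> c i mod p = 0"
  unfolding indep_mod_def by blast

lemma vec_mod_in_vecs: "q > 0 \<Longrightarrow> vec_mod q N v \<in> vecs q N"
  by (auto simp: vec_mod_def vecs_iff)

lemma vecs_mod_inj:
  assumes "v \<in> vecs q N" and "w \<in> vecs q N" and "\<forall>i<N. v i mod q = w i mod q"
  shows "v = w"
proof
  fix i show "v i = w i"
    using assms by (cases "i < N") (simp_all add: vecs_iff)
qed

lemma finite_ker_mod: "finite (ker_mod q N t F)"
  using finite_vecs by (simp add: ker_mod_def)

lemma sum_mod_cong:
  assumes "\<forall>i\<in>A. f i mod d = g i mod (d::int)"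
  shows "(\<Sum>i\<in>A. f i) mod d = (\<Sum>i\<in>A. g i) mod d"
proof -
  have "d dvd (\<Sum>i\<in>A. f i - g i)"
    by (rule dvd_sum) (use assms in \<open>simp add: mod_eq_dvd_iff\<close>)
  then show ?thesis by (simp add: mod_eq_dvd_iff sum_subtractf)
qed

lemma sum_mult_sum_swap:
  fixes x :: "'i \<Rightarrow> 'a::comm_ring_1"
  shows "(\<Sum>i\<in>A. x i * (\<Sum>j\<in>B. M i j * v j)) = (\<Sum>j\<in>B. (\<Sum>i\<in>A. x i * M i j) * v j)"
proof -
  have "(\<Sum>i\<in>A. x i * (\<Sum>j\<in>B. M i j * v j)) = (\<Sum>i\<in>A. \<Sum>j\<in>B. x i * M i j * v j)"
    by (simp add: sum_distrib_left mult.assoc)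
  also have "\<dots> = (\<Sum>j\<in>B. \<Sum>i\<in>A. x i * M i j * v j)" by (rule sum.swap)
  also have "\<dots> = (\<Sum>j\<in>B. (\<Sum>i\<in>A. x i * M i j) * v j)" by (simp add: sum_distrib_right)
  finally show ?thesis .
qed

lemma sum_lessThan_add: "(\<Sum>i<a + b. f i) = (\<Sum>i<a. f i) + (\<Sum>i<(b::nat). f (a + i))"
  by (induction b) (simp_all add: add_ac)

lemma dot_vec_mod: "dot N f (vec_mod q N v) mod q = dot N f v mod q"
  unfolding dot_def by (rule sum_mod_cong) (auto simp: vec_mod_def mod_mult_right_eq)

lemma dot_add_right: "dot N f (\<lambda>l. v l + w l) = dot N f v + dot N f w"
  unfolding dot_def by (simp add: algebra_simps sum.distrib)

lemma dot_fun_upd: "c < N \<Longrightarrow> dot N f (b(c := b c + x)) = dot N f b + f c * x"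
proof -
  assume c: "c < N"
  have "dot N f (b(c := b c + x)) = (\<Sum>l<N. f l * b l + (if l = c then f c * x else 0))"
    unfolding dot_def by (rule sum.cong) (auto simp: algebra_simps)
  also have "\<dots> = dot N f b + f c * x" using c by (simp add: sum.distrib dot_def)
  finally show ?thesis .
qed

lemma dot_sum_left: "dot N (\<lambda>l. \<Sum>i<r. x i * g i l) v = (\<Sum>i<r. x i * dot N (g i) v)"
  unfolding dot_def by (rule sum_mult_sum_swap[symmetric])

lemma dot_sum_right: "dot N f (\<lambda>l. \<Sum>j<s. c j * a j l) = (\<Sum>j<s. c j * dot N f (a j))"
  unfolding dot_def by (simp add: sum_distrib_left sum.swap[of _ "{..<N}"] algebra_simps)

lemma dot_diff_left: "dot N (\<lambda>l. f l - x * g l) b = dot N f b - x * dot N g b"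
  unfolding dot_def by (simp add: algebra_simps sum_subtractf sum_distrib_left)

lemma indep_mod_cong: "\<forall>i<s. a i = b i \<Longrightarrow> indep_mod p N s a = indep_mod p N s b"
  unfolding indep_mod_def by simp

lemma indep_mod_prefix:
  assumes "indep_mod p N (Suc s) a"
  shows "indep_mod p N s a"
  unfolding indep_mod_def
proof (intro allI impI)
  fix c i assume "\<forall>l<N. (\<Sum>i<s. c i * a i l) mod p = 0" and i: "i < s"
  then have "\<forall>l<N. (\<Sum>i<Suc s. (c(s:=0)) i * a i l) mod p = 0" by simp
  then have "\<forall>i<Suc s. (c(s:=0)) i mod p = 0" using assms unfolding indep_mod_def by blast
  then have "(c(s:=0)) i mod p = 0" using i less_SucI by blast
  then show "c i mod p = 0" using i by simp
qed

lemma indep_mod_coeffs_unique: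
  assumes "indep_mod p N s a" and "\<forall>l<N. (\<Sum>i<s. c i * a i l) mod p = (\<Sum>i<s. c' i * a i l) mod p"
  shows "\<forall>i<s. c i mod p = c' i mod p"
proof -
  have "\<forall>l<N. (\<Sum>i<s. (c i - c' i) * a i l) mod p = 0"
  proof (intro allI impI)
    fix l assume "l < N"
    then have "p dvd (\<Sum>i<s. c i * a i l) - (\<Sum>i<s. c' i * a i l)"
      using assms(2) mod_eq_dvd_iff by blast
    moreover have "(\<Sum>i<s. (c i - c' i) * a i l) = (\<Sum>i<s. c i * a i l) - (\<Sum>i<s. c' i * a i l)"
      by (simp add: algebra_simps sum_subtractf)
    ultimately show "(\<Sum>i<s. (c i - c' i) * a i l) mod p = 0" by (simp add: dvd_eq_mod_eq_0)
  qed
  then have "(c i - c' i) mod p = 0" if "i < s" for i using indep_modD[OF assms(1), where c = "\<lambda>i. c i - c' i"] that by simp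
  then show ?thesis by (simp add: mod_eq_dvd_iff dvd_eq_mod_eq_0)
qed

lemma indep_mod_last_nonzero:
  assumes "prime p" and "indep_mod p N (Suc t) F"
  shows "\<exists>c<N. \<not> p dvd F t c"
proof (rule ccontr)
  define e where "e = (\<lambda>i. if i = t then 1 else 0 :: int)"
  assume "\<not> (\<exists>c<N. \<not> p dvd F t c)"
  then have "\<forall>l<N. (\<Sum>i<Suc t. e i * F i l) mod p = 0" by (simp add: e_def)
  then have "e t mod p = 0" using assms(2) unfolding indep_mod_def by blast
  then have "p dvd 1" by (simp add: e_def dvd_eq_mod_eq_0)
  then show False using assms(1) not_prime_unit by blast
qed

lemma indep_mod_row_reduce:
  assumes "indep_mod p N (Suc t) F"
  shows "indep_mod p N t (\<lambda>i l. F i l - x i * F t l)"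
  unfolding indep_mod_def
proof (intro allI impI)
  fix c i assume H: "\<forall>l<N. (\<Sum>i<t. c i * (F i l - x i * F t l)) mod p = 0" and i: "i < t"
  define c' where "c' = c(t := - (\<Sum>i<t. c i * x i))"
  have "(\<Sum>i<Suc t. c' i * F i l) = (\<Sum>i<t. c i * (F i l - x i * F t l))" for l
    by (simp add: c'_def algebra_simps sum_subtractf sum_distrib_left sum_distrib_right)
  then have "\<forall>l<N. (\<Sum>i<Suc t. c' i * F i l) mod p = 0" using H by simp
  then have "c' i mod p = 0" using assms i unfolding indep_mod_def by auto
  then show "c i mod p = 0" using i by (simp add: c'_def)
qed

section \<open>Linear systems modulo prime powers\<close>

text \<open>Gaussian elimination on the last functional: it has a unit entry mod p at some
  coordinate c, so the remaining functionals can be cleared at c and the last equation is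
  then solved by adjusting coordinate c alone.\<close>

lemma indep_mod_solvable:
  assumes p: "prime p" and "indep_mod p N t F"
  shows "\<exists>b. \<forall>i<t. dot N (F i) b mod (p^e) = y i mod (p^e)"
  using assms(2)
proof (induction t arbitrary: F y)
  case 0
  then show ?case by simp
next
  case (Suc t)
  let ?q = "p^e"
  obtain c where c: "c < N" "\<not> p dvd F t c" using indep_mod_last_nonzero[OF p Suc.prems] by blast
  then have "coprime (F t c) ?q" using p by (simp add: prime_imp_coprime coprime_commute)
  then obtain u where "[F t c * u = 1] (mod ?q)" using cong_solve_coprime_int by blast
  then have qu: "?q dvd F t c * u - 1" by (simp add: cong_iff_dvd_diff)
  define G where "G = (\<lambda>i l. F i l - (F i c * u) * F t l)"
  have "indep_mod p N t G"
    unfolding G_def by (rule indep_mod_row_reduce[OF Suc.prems])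
  then obtain b' where b': "\<forall>i<t. dot N (G i) b' mod ?q = (y i - F i c * u * y t) mod ?q"
    using Suc.IH[of G "\<lambda>i. y i - F i c * u * y t"] by blast
  define b where "b = b'(c := b' c + u * (y t - dot N (F t) b'))"
  have db: "dot N f b = dot N f b' + f c * (u * (y t - dot N (F t) b'))" for f
    unfolding b_def using dot_fun_upd[OF c(1)] by simp
  have "?q dvd dot N (F i) b - y i" if i: "i < Suc t" for i
  proof (cases "i = t")
    case True
    have "dot N (F t) b - y t = (F t c * u - 1) * (y t - dot N (F t) b')"
      by (simp add: db algebra_simps)
    then show ?thesis using True qu by simp
  next
    case False
    have "dot N (G i) b' = dot N (F i) b' - F i c * u * dot N (F t) b'"
      unfolding G_def by (rule dot_diff_left)
    then have "dot N (F i) b - y i = dot N (G i) b' - (y i - F i c * u * y t)"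
      by (simp add: db algebra_simps)
    moreover have "?q dvd dot N (G i) b' - (y i - F i c * u * y t)"
      using b' i False by (simp add: mod_eq_dvd_iff)
    ultimately show ?thesis by metis
  qed
  then show ?case by (auto simp: mod_eq_dvd_iff)
qed

lemma card_vecs_shift:
  assumes "q > 0"
  shows "card {b \<in> vecs q N. P b} = card {v \<in> vecs q N. P (vec_mod q N (\<lambda>l. v l + w l))}"
proof -
  have "bij_betw (\<lambda>v. vec_mod q N (\<lambda>l. v l + w l))
          {v \<in> vecs q N. P (vec_mod q N (\<lambda>l. v l + w l))} {b \<in> vecs q N. P b}"
  proof (rule bij_betw_byWitness[where f' = "\<lambda>b. vec_mod q N (\<lambda>l. b l - w l)"])
    have inv: "vec_mod q N (\<lambda>l. vec_mod q N (\<lambda>l. v l + x l) l - x l) = v"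
      if "v \<in> vecs q N" for v x
    proof
      fix l show "vec_mod q N (\<lambda>l. vec_mod q N (\<lambda>l. v l + x l) l - x l) l = v l"
        using that by (cases "l < N") (simp_all add: vec_mod_def vecs_iff mod_diff_left_eq)
    qed
    show "\<forall>v\<in>{v \<in> vecs q N. P (vec_mod q N (\<lambda>l. v l + w l))}.
        vec_mod q N (\<lambda>l. vec_mod q N (\<lambda>l. v l + w l) l - w l) = v"
      using inv[where x = w] by simp
    show "\<forall>b\<in>{b \<in> vecs q N. P b}. vec_mod q N (\<lambda>l. vec_mod q N (\<lambda>l. b l - w l) l + w l) = b"
      using inv[where x = "\<lambda>l. - w l"] by simp
    then show "(\<lambda>b. vec_mod q N (\<lambda>l. b l - w l)) ` {b \<in> vecs q N. P b}
        \<subseteq> {v \<in> vecs q N. P (vec_mod q N (\<lambda>l. v l + w l))}"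
      using vec_mod_in_vecs[OF assms] by auto
    show "(\<lambda>v. vec_mod q N (\<lambda>l. v l + w l)) ` {v \<in> vecs q N. P (vec_mod q N (\<lambda>l. v l + w l))}
        \<subseteq> {b \<in> vecs q N. P b}"
      using vec_mod_in_vecs[OF assms] by auto
  qed
  then show ?thesis by (simp add: bij_betw_same_card)
qed

lemma card_solutions_mod:
  assumes p: "prime p" and ind: "indep_mod p N t F" and y: "y \<in> vecs (p^e) t"
  shows "card {b \<in> vecs (p^e) N. \<forall>i<t. dot N (F i) b mod (p^e) = y i} = card (ker_mod (p^e) N t F)"
proof -
  let ?q = "p^e"
  have q: "?q > 0" using p by (simp add: prime_gt_0_int)
  obtain b0 where b0: "\<forall>i<t. dot N (F i) b0 mod ?q = y i mod ?q"
    using indep_mod_solvable[OF p ind] by blast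
  define w where "w = vec_mod ?q N b0"
  have w: "dot N (F i) w mod ?q = y i" if "i < t" for i
    using b0 that y dot_vec_mod[of N "F i" ?q b0] by (auto simp: w_def vecs_iff)
  have "dot N (F i) (vec_mod ?q N (\<lambda>l. v l + w l)) mod ?q = y i \<longleftrightarrow> dot N (F i) v mod ?q = 0"
    if i: "i < t" for i v
  proof -
    have "dot N (F i) (vec_mod ?q N (\<lambda>l. v l + w l)) mod ?q = (dot N (F i) v + dot N (F i) w) mod ?q"
      by (simp add: dot_vec_mod dot_add_right)
    also have "\<dots> = (dot N (F i) v + y i) mod ?q" using w[OF i] mod_add_right_eq by metis
    finally have "dot N (F i) (vec_mod ?q N (\<lambda>l. v l + w l)) mod ?q = (dot N (F i) v + y i) mod ?q" .
    moreover have "(dot N (F i) v + y i) mod ?q = y i mod ?q \<longleftrightarrow> ?q dvd dot N (F i) v"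
      by (simp add: mod_eq_dvd_iff)
    moreover have "y i mod ?q = y i" using y i by (simp add: vecs_iff)
    ultimately show ?thesis by (simp add: dvd_eq_mod_eq_0)
  qed
  then have "{v \<in> vecs ?q N. \<forall>i<t. dot N (F i) (vec_mod ?q N (\<lambda>l. v l + w l)) mod ?q = y i}
      = ker_mod ?q N t F"
    unfolding ker_mod_def by auto
  moreover have "card {b \<in> vecs ?q N. \<forall>i<t. dot N (F i) b mod ?q = y i}
      = card {v \<in> vecs ?q N. \<forall>i<t. dot N (F i) (vec_mod ?q N (\<lambda>l. v l + w l)) mod ?q = y i}"
    by (rule card_vecs_shift[OF q])
  ultimately show ?thesis by simp
qed

lemma card_ker_mod:
  assumes p: "prime p" and ind: "indep_mod p N t F" and "t \<le> N"
  shows "card (ker_mod (p^e) N t F) = nat (p^e) ^ (N - t)"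
proof -
  let ?q = "p^e"
  have q: "?q > 0" using p by (simp add: prime_gt_0_int)
  define fibre where "fibre = (\<lambda>y. {b \<in> vecs ?q N. \<forall>i<t. dot N (F i) b mod ?q = y i})"
  have "vecs ?q N = (\<Union>y\<in>vecs ?q t. fibre y)"
  proof
    show "vecs ?q N \<subseteq> (\<Union>y\<in>vecs ?q t. fibre y)"
    proof
      fix b assume b: "b \<in> vecs ?q N"
      then have "b \<in> fibre (vec_mod ?q t (\<lambda>i. dot N (F i) b))" by (simp add: fibre_def vec_mod_def)
      then show "b \<in> (\<Union>y\<in>vecs ?q t. fibre y)" using vec_mod_in_vecs[OF q] by blast
    qed
  qed (auto simp: fibre_def)
  moreover have "fibre y \<inter> fibre y' = {}" if "y \<in> vecs ?q t" "y' \<in> vecs ?q t" "y \<noteq> y'" for y y'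
  proof -
    have "\<exists>i<t. y i \<noteq> y' i" using vecs_mod_inj[OF that(1,2)] that(3) by auto
    then show ?thesis by (auto simp: fibre_def)
  qed
  ultimately have "card (vecs ?q N) = (\<Sum>y\<in>vecs ?q t. card (fibre y))"
    using card_UN_disjoint[of "vecs ?q t" fibre] finite_vecs by (simp add: fibre_def)
  also have "\<dots> = card (vecs ?q t) * card (ker_mod ?q N t F)"
    by (simp add: fibre_def card_solutions_mod[OF p ind])
  finally have "nat ?q ^ t * card (ker_mod ?q N t F) = nat ?q ^ t * nat ?q ^ (N - t)"
    using \<open>t \<le> N\<close> by (simp add: card_vecs flip: power_add)
  moreover have "nat ?q ^ t \<noteq> 0" using q by simp
  ultimately show ?thesis by (metis mult_left_cancel)
qed

section \<open>Extending an independent family\<close>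

lemma indep_mod_extend_not_in_span:
  assumes p: "prime p" and ind: "indep_mod p N (Suc s) (a(s:=b))"
  shows "\<not> (\<exists>c. \<forall>l<N. (b l - (\<Sum>i<s. c i * a i l)) mod p = 0)"
proof
  assume "\<exists>c. \<forall>l<N. (b l - (\<Sum>i<s. c i * a i l)) mod p = 0"
  then obtain c where c: "\<forall>l<N. (b l - (\<Sum>i<s. c i * a i l)) mod p = 0" by blast
  define c' where "c' = (\<lambda>i. - c i)(s := 1)"
  have "(\<Sum>i<Suc s. c' i * (a(s:=b)) i l) = b l - (\<Sum>i<s. c i * a i l)" for l
    by (simp add: c'_def sum_negf)
  then have "c' s mod p = 0" using indep_modD[OF ind, of c' s] c by simp
  then have "p dvd 1" by (simp add: c'_def dvd_eq_mod_eq_0)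
  then show False using p not_prime_unit by blast
qed

lemma indep_mod_extend_if_not_in_span:
  assumes p: "prime p" and ind: "indep_mod p N s a"
    and no_c: "\<not> (\<exists>c. \<forall>l<N. (b l - (\<Sum>i<s. c i * a i l)) mod p = 0)"
  shows "indep_mod p N (Suc s) (a(s:=b))"
  unfolding indep_mod_def
proof (intro allI impI)
  fix c i assume H: "\<forall>l<N. (\<Sum>i<Suc s. c i * (a(s:=b)) i l) mod p = 0" and i: "i < Suc s"
  have H': "p dvd (\<Sum>i<s. c i * a i l) + c s * b l" if "l < N" for l
    using H that by (simp add: dvd_eq_mod_eq_0)
  show "c i mod p = 0"
  proof (cases "p dvd c s")
    case True
    then have "\<forall>l<N. p dvd (\<Sum>i<s. c i * a i l)" using H' dvd_add_left_iff dvd_mult2 by blast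
    then have "\<forall>l<N. (\<Sum>i<s. c i * a i l) mod p = 0" by simp
    from indep_modD[OF ind this] show ?thesis using i True by (cases "i = s") auto
  next
    case False
    then have "coprime (c s) p" using p by (simp add: prime_imp_coprime coprime_commute)
    then obtain u where "[c s * u = 1] (mod p)" using cong_solve_coprime_int by blast
    then have u: "p dvd c s * u - 1" by (simp add: cong_iff_dvd_diff)
    \<comment> \<open>c s is a unit mod p, so b is a combination of the a_i mod p\<close>
    have "(b l - (\<Sum>i<s. (- u * c i) * a i l)) mod p = 0" if l: "l < N" for l
    proof -
      have "b l - (\<Sum>i<s. (- u * c i) * a i l)
          = u * ((\<Sum>i<s. c i * a i l) + c s * b l) - (c s * u - 1) * b l"
        by (simp add: algebra_simps sum_distrib_left sum_negf)
      moreover have "p dvd u * ((\<Sum>i<s. c i * a i l) + c s * b l) - (c s * u - 1) * b l"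
        using H'[OF l] u by (simp add: dvd_diff)
      ultimately show ?thesis by (simp add: dvd_eq_mod_eq_0)
    qed
    then have "\<exists>c. \<forall>l<N. (b l - (\<Sum>i<s. c i * a i l)) mod p = 0"
      by (intro exI[where x = "\<lambda>i. - u * c i"] allI impI)
    with no_c show ?thesis by blast
  qed
qed

lemma indep_mod_extend_iff:
  assumes "prime p" and "indep_mod p N s a"
  shows "indep_mod p N (Suc s) (a(s:=b)) \<longleftrightarrow>
    \<not> (\<exists>c. \<forall>l<N. (b l - (\<Sum>i<s. c i * a i l)) mod p = 0)"
  using indep_mod_extend_not_in_span[OF assms(1)] indep_mod_extend_if_not_in_span[OF assms] by blast

lemma card_ker_mod_multiples:
  assumes p: "prime p"
  shows "card {b \<in> ker_mod (p^Suc m) N t F. \<forall>l<N. b l mod p = 0} = card (ker_mod (p^m) N t F)"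
proof -
  have p1: "p > 1" using p by (simp add: prime_gt_1_int)
  have scale: "dot N (F i) (\<lambda>l. p * w l) mod p^Suc m = p * (dot N (F i) w mod p^m)" for i w
  proof -
    have "dot N (F i) (\<lambda>l. p * w l) = p * dot N (F i) w"
      by (simp add: dot_def sum_distrib_left algebra_simps)
    then show ?thesis by (simp add: mod_mult_mult1)
  qed
  have range: "p * x \<in> {0..<p^Suc m} \<longleftrightarrow> x \<in> {0..<p^m}" for x
    using p1 by (auto simp: zero_le_mult_iff)
  have "{b \<in> ker_mod (p^Suc m) N t F. \<forall>l<N. b l mod p = 0} = (\<lambda>w l. p * w l) ` ker_mod (p^m) N t F"
  proof (intro equalityI subsetI)
    fix b assume b: "b \<in> {b \<in> ker_mod (p^Suc m) N t F. \<forall>l<N. b l mod p = 0}"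
    define w where "w = (\<lambda>l. b l div p)"
    have bw: "b = (\<lambda>l. p * w l)"
    proof
      fix l show "b l = p * w l"
      proof (cases "l < N")
        case True
        then have "b l mod p = 0" using b by simp
        then show ?thesis unfolding w_def by (metis add.right_neutral mult_div_mod_eq)
      qed (use b in \<open>simp add: w_def ker_mod_def vecs_iff\<close>)
    qed
    have "w \<in> ker_mod (p^m) N t F"
      using b range p1 unfolding bw by (auto simp: ker_mod_def vecs_iff scale simp del: power_Suc)
    then show "b \<in> (\<lambda>w l. p * w l) ` ker_mod (p^m) N t F"
      unfolding bw by blast
  next
    fix b assume "b \<in> (\<lambda>w l. p * w l) ` ker_mod (p^m) N t F"
    then obtain w where w: "w \<in> ker_mod (p^m) N t F" and bw: "b = (\<lambda>l. p * w l)" by blast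
    then show "b \<in> {b \<in> ker_mod (p^Suc m) N t F. \<forall>l<N. b l mod p = 0}"
      using range by (auto simp: ker_mod_def vecs_iff scale simp del: power_Suc)
  qed
  moreover have "inj_on (\<lambda>w l. p * w l) (ker_mod (p^m) N t F)"
    using p1 by (auto simp: inj_on_def fun_eq_iff)
  ultimately show ?thesis by (simp add: card_image)
qed

lemma card_ker_mod_coset:
  assumes p: "prime p" and m: "m > 0" and aK: "\<forall>j<s. a j \<in> ker_mod (p^m) N t F"
  shows "card {b \<in> ker_mod (p^m) N t F. \<forall>l<N. (b l - (\<Sum>j<s. c j * a j l)) mod p = 0}
    = card {b \<in> ker_mod (p^m) N t F. \<forall>l<N. b l mod p = 0}"
proof -
  let ?q = "p^m"
  define S where "S = (\<lambda>l. \<Sum>j<s. c j * a j l)"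
  define w where "w = vec_mod ?q N S"
  let ?shift = "\<lambda>v. vec_mod ?q N (\<lambda>l. v l + w l)"
  have q: "?q > 0" using p by (simp add: prime_gt_0_int)
  have "p dvd ?q" using m by simp
  have S_ker: "?q dvd dot N (F i) S" if "i < t" for i
    unfolding S_def dot_sum_right using aK that
    by (intro dvd_sum) (auto simp: ker_mod_def simp flip: dvd_eq_mod_eq_0)
  have dot_shift: "dot N (F i) (?shift v) mod ?q = dot N (F i) v mod ?q" if "i < t" for i v
  proof -
    have "dot N (F i) (?shift v) mod ?q = (dot N (F i) v + dot N (F i) w mod ?q) mod ?q"
      by (simp add: dot_vec_mod dot_add_right mod_add_right_eq)
    also have "dot N (F i) w mod ?q = 0" using S_ker[OF that] by (simp add: w_def dot_vec_mod)
    finally show ?thesis by simp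
  qed
  have shift_mod_p: "(?shift v l - S l) mod p = v l mod p" if "l < N" for v l
  proof -
    have e: "?shift v l - S l - v l = ((v l + w l) mod ?q - (v l + w l)) + (S l mod ?q - S l)"
      using that by (simp add: vec_mod_def w_def)
    have "?q dvd ((v l + w l) mod ?q - (v l + w l)) + (S l mod ?q - S l)"
      by (intro dvd_add) (simp_all flip: mod_eq_dvd_iff)
    then have "?q dvd ?shift v l - S l - v l" by (simp only: e)
    then have "p dvd ?shift v l - S l - v l" using \<open>p dvd ?q\<close> dvd_trans by blast
    then show ?thesis by (simp add: mod_eq_dvd_iff)
  qed
  have "card {b \<in> vecs ?q N. (\<forall>i<t. dot N (F i) b mod ?q = 0) \<and> (\<forall>l<N. (b l - S l) mod p = 0)}
     = card {v \<in> vecs ?q N. (\<forall>i<t. dot N (F i) (?shift v) mod ?q = 0) \<and>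
                (\<forall>l<N. (?shift v l - S l) mod p = 0)}"
    by (rule card_vecs_shift[OF q])
  also have "\<dots> = card {b \<in> vecs ?q N. (\<forall>i<t. dot N (F i) b mod ?q = 0) \<and> (\<forall>l<N. b l mod p = 0)}"
    by (intro arg_cong[where f = card] Collect_cong) (simp add: dot_shift shift_mod_p)
  finally show ?thesis unfolding S_def ker_mod_def by (simp add: conj_assoc)
qed

text \<open>The kernel vectors congruent mod p to a combination of the a_j split into one coset
  per coefficient vector in (Z/p)^s; the cosets are disjoint by independence and each has as
  many elements as the kernel modulo p^(m-1).\<close>

lemma card_ker_mod_in_span_mod:
  assumes p: "prime p" and m: "m > 0"
    and aK: "\<forall>j<s. a j \<in> ker_mod (p^m) N t F" and ind: "indep_mod p N s a"
  shows "card {b \<in> ker_mod (p^m) N t F. \<exists>c. \<forall>l<N. (b l - (\<Sum>j<s. c j * a j l)) mod p = 0}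
    = nat p ^ s * card (ker_mod (p^(m-1)) N t F)"
proof -
  let ?K = "ker_mod (p^m) N t F"
  define B where "B c = {b \<in> ?K. \<forall>l<N. (b l - (\<Sum>j<s. c j * a j l)) mod p = 0}" for c
  have "p > 0" using p by (simp add: prime_gt_0_int)
  have congr: "(x - y) mod p = 0 \<longleftrightarrow> x mod p = y mod p" for x y
    by (simp add: mod_eq_dvd_iff dvd_eq_mod_eq_0)
  have "{b \<in> ?K. \<exists>c. \<forall>l<N. (b l - (\<Sum>j<s. c j * a j l)) mod p = 0} = (\<Union>c\<in>vecs p s. B c)"
  proof (intro equalityI subsetI)
    fix b assume "b \<in> {b \<in> ?K. \<exists>c. \<forall>l<N. (b l - (\<Sum>j<s. c j * a j l)) mod p = 0}"
    then obtain c where b: "b \<in> ?K" and c: "\<forall>l<N. (b l - (\<Sum>j<s. c j * a j l)) mod p = 0"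
      by blast
    have "(\<Sum>j<s. vec_mod p s c j * a j l) mod p = (\<Sum>j<s. c j * a j l) mod p" for l
      by (rule sum_mod_cong) (simp add: vec_mod_def mod_mult_left_eq)
    then have "b \<in> B (vec_mod p s c)"
      using b c by (simp add: B_def congr)
    then show "b \<in> (\<Union>c\<in>vecs p s. B c)" using vec_mod_in_vecs[OF \<open>p > 0\<close>] by blast
  qed (auto simp: B_def)
  moreover have "B c \<inter> B c' = {}" if c: "c \<in> vecs p s" "c' \<in> vecs p s" "c \<noteq> c'" for c c'
  proof -
    have "c = c'" if "b \<in> B c" "b \<in> B c'" for b
    proof -
      have "\<forall>l<N. (\<Sum>j<s. c j * a j l) mod p = (\<Sum>j<s. c' j * a j l) mod p"
        using that by (auto simp: B_def congr)
      then have "\<forall>j<s. c j mod p = c' j mod p" by (rule indep_mod_coeffs_unique[OF ind])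
      with c show "c = c'" using vecs_mod_inj by blast
    qed
    then show ?thesis using c(3) by blast
  qed
  moreover have "card (B c) = card (ker_mod (p^(m-1)) N t F)" for c
  proof -
    obtain m' where m': "m = Suc m'" using m by (cases m) auto
    show ?thesis unfolding B_def card_ker_mod_coset[OF p m aK]
      using card_ker_mod_multiples[OF p, of m'] by (simp add: m')
  qed
  ultimately show ?thesis
    using card_UN_disjoint[of "vecs p s" B] finite_vecs
    by (simp add: B_def finite_ker_mod card_vecs)
qed

lemma card_indep_extensions:
  assumes p: "prime p" and m: "m > 0" and indF: "indep_mod p N t F" and "t \<le> N"
    and aK: "\<forall>j<s. a j \<in> ker_mod (p^m) N t F" and ind: "indep_mod p N s a"
  shows "card {b \<in> ker_mod (p^m) N t F. indep_mod p N (Suc s) (a(s:=b))}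
    = nat (p^m) ^ (N - t) - nat p ^ s * nat (p^(m-1)) ^ (N - t)"
proof -
  let ?K = "ker_mod (p^m) N t F"
  let ?span = "{b \<in> ?K. \<exists>c. \<forall>l<N. (b l - (\<Sum>j<s. c j * a j l)) mod p = 0}"
  have "{b \<in> ?K. indep_mod p N (Suc s) (a(s:=b))} = ?K - ?span"
    using indep_mod_extend_iff[OF p ind] by auto
  then have "card {b \<in> ?K. indep_mod p N (Suc s) (a(s:=b))} = card ?K - card ?span"
    by (simp add: card_Diff_subset finite_ker_mod)
  also have "\<dots> = nat (p^m) ^ (N - t) - nat p ^ s * nat (p^(m-1)) ^ (N - t)"
    using card_ker_mod_in_span_mod[OF p m aK ind] card_ker_mod[OF p indF \<open>t \<le> N\<close>] by simp
  finally show ?thesis .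
qed

lemma indep_mod_prime_power_dvd:
  assumes p: "prime p" and ind: "indep_mod p N r a"
  shows "\<forall>l<N. p^e dvd (\<Sum>i<r. c i * a i l) \<Longrightarrow> i < r \<Longrightarrow> p^e dvd c i"
proof (induction e arbitrary: c i)
  case (Suc e)
  have rel: "\<forall>l<N. (\<Sum>i<r. c i * a i l) mod p = 0"
  proof (intro allI impI)
    fix l assume "l < N"
    then have "p * p^e dvd (\<Sum>i<r. c i * a i l)" using Suc.prems(1) by simp
    then have "p dvd (\<Sum>i<r. c i * a i l)" by (rule dvd_mult_left)
    then show "(\<Sum>i<r. c i * a i l) mod p = 0" by simp
  qed
  have p_dvd: "p dvd c j" if "j < r" for j
    using indep_modD[OF ind rel that] by (simp add: dvd_eq_mod_eq_0)
  define c' where "c' j = c j div p" for j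
  have split: "(\<Sum>i<r. c i * a i l) = p * (\<Sum>i<r. c' i * a i l)" for l
    unfolding sum_distrib_left c'_def
    by (rule sum.cong) (use p_dvd in \<open>auto simp flip: mult.assoc\<close>)
  have "\<forall>l<N. p * p^e dvd p * (\<Sum>i<r. c' i * a i l)"
    using Suc.prems(1) by (simp flip: split)
  then have "\<forall>l<N. p^e dvd (\<Sum>i<r. c' i * a i l)" using p by (simp add: prime_gt_0_int)
  then have "p * p^e dvd p * c' i" using Suc.IH Suc.prems(2) by simp
  then show ?case using p_dvd[OF Suc.prems(2)] by (simp add: c'_def)
qed simp

lemma indep_mod_prime_power_iff:
  assumes p: "prime p" and m: "m > 0"
  shows "indep_mod (p^m) N r a \<longleftrightarrow> indep_mod p N r a"
proof
  assume ind: "indep_mod (p^m) N r a"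
  have pm: "p^m = p^(m-1) * p" using m by (simp add: power_eq_if)
  show "indep_mod p N r a" unfolding indep_mod_def
  proof (intro allI impI)
    fix c i assume H: "\<forall>l<N. (\<Sum>i<r. c i * a i l) mod p = 0" and "i < r"
    have "\<forall>l<N. (\<Sum>i<r. (p^(m-1) * c i) * a i l) mod (p^m) = 0"
    proof (intro allI impI)
      fix l assume "l < N"
      then have "p dvd (\<Sum>i<r. c i * a i l)" using H by (simp add: dvd_eq_mod_eq_0)
      then have "p^m dvd p^(m-1) * (\<Sum>i<r. c i * a i l)" unfolding pm by simp
      then show "(\<Sum>i<r. (p^(m-1) * c i) * a i l) mod (p^m) = 0"
        by (simp add: sum_distrib_left mult.assoc dvd_eq_mod_eq_0)
    qed
    from indep_modD[OF ind this \<open>i < r\<close>] have "p^(m-1) * p dvd p^(m-1) * c i"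
      unfolding pm by (simp add: dvd_eq_mod_eq_0)
    then show "c i mod p = 0" using p by (simp add: prime_gt_0_int)
  qed
next
  assume "indep_mod p N r a"
  then show "indep_mod (p^m) N r a"
    using indep_mod_prime_power_dvd[OF p] by (simp add: indep_mod_def dvd_eq_mod_eq_0)
qed

section \<open>The symplectic form\<close>

definition symp_dual :: "nat \<Rightarrow> (nat \<Rightarrow> int) \<Rightarrow> (nat \<Rightarrow> int)" where
  "symp_dual n u = (\<lambda>l. if l < n then - u (n + l) else if l < 2*n then u (l - n) else 0)"

lemma symp_eq_dot: "symp n u b = dot (2*n) (symp_dual n u) b"
proof -
  have "dot (2*n) (symp_dual n u) b
      = (\<Sum>l<n. symp_dual n u l * b l) + (\<Sum>i<n. symp_dual n u (n+i) * b (n+i))"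
    unfolding dot_def mult_2 by (rule sum_lessThan_add)
  also have "\<dots> = symp n u b"
    by (simp add: symp_dual_def symp_def sum_subtractf sum_negf)
  finally show ?thesis by simp
qed

lemma symp_antisym: "symp n b a = - symp n a b"
  unfolding symp_def by (simp add: sum_negf[symmetric] algebra_simps)

lemma symp_self: "symp n a a = 0"
  using symp_antisym[of n a a] by simp

lemma indep_mod_symp_dual:
  assumes "indep_mod p (2*n) s a"
  shows "indep_mod p (2*n) s (\<lambda>i. symp_dual n (a i))"
  unfolding indep_mod_def
proof (intro allI impI)
  fix c i assume H: "\<forall>l<2*n. (\<Sum>i<s. c i * symp_dual n (a i) l) mod p = 0" and "i < s"
  have "(\<Sum>i<s. c i * a i l) mod p = 0" if l: "l < 2*n" for l
  proof (cases "l < n")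
    case True
    then have "(\<Sum>i<s. c i * symp_dual n (a i) (n + l)) = (\<Sum>i<s. c i * a i l)"
      by (simp add: symp_dual_def)
    moreover have "n + l < 2*n" using True by simp
    ultimately show ?thesis using H[rule_format, of "n + l"] by simp
  next
    case False
    then have "l - n < n" "n + (l - n) = l" using l by auto
    then have "(\<Sum>i<s. c i * symp_dual n (a i) (l - n)) = - (\<Sum>i<s. c i * a i l)"
      by (simp add: symp_dual_def sum_negf)
    moreover have "p dvd (\<Sum>i<s. c i * symp_dual n (a i) (l - n))"
      using H \<open>l - n < n\<close> by (simp add: dvd_eq_mod_eq_0)
    ultimately show ?thesis by (simp flip: dvd_eq_mod_eq_0)
  qed
  then show "c i mod p = 0" using indep_modD[OF assms] \<open>i < s\<close> by blast
qed

lemma symp_mod_cong: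
  assumes "\<forall>l<2*n. u l mod d = u' l mod (d::int)" and "\<forall>l<2*n. v l mod d = v' l mod d"
  shows "symp n u v mod d = symp n u' v' mod d"
  unfolding symp_def
proof (rule sum_mod_cong, intro ballI)
  fix i assume "i \<in> {..<n}"
  then have "i < 2*n" "n + i < 2*n" by auto
  then show "(u i * v (n + i) - u (n + i) * v i) mod d = (u' i * v' (n + i) - u' (n + i) * v' i) mod d"
    using assms by (intro mod_diff_cong mod_mult_cong) auto
qed

lemma symp_dual_sum: "symp_dual n (\<lambda>l. \<Sum>i<r. x i * a i l) = (\<lambda>l. \<Sum>i<r. x i * symp_dual n (a i) l)"
proof
  fix l show "symp_dual n (\<lambda>l. \<Sum>i<r. x i * a i l) l = (\<Sum>i<r. x i * symp_dual n (a i) l)"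
    by (cases "l < n"; cases "l < 2*n") (simp_all add: symp_dual_def sum_negf)
qed

definition symp_orth :: "nat \<Rightarrow> int \<Rightarrow> (nat \<Rightarrow> int) \<Rightarrow> (nat \<Rightarrow> int) \<Rightarrow> bool" where
  "symp_orth n q u v \<longleftrightarrow> symp n u v mod q = 0"

lemma symp_orth_sym: "symp_orth n q u v \<Longrightarrow> symp_orth n q v u"
  by (simp add: symp_orth_def symp_antisym[of n u v] flip: dvd_eq_mod_eq_0)

lemma symp_orth_refl: "symp_orth n q u u"
  by (simp add: symp_orth_def symp_self)

section \<open>Counting independent tuples\<close>

definition indep_tuples ::
    "int \<Rightarrow> int \<Rightarrow> nat \<Rightarrow> nat \<Rightarrow> ((nat \<Rightarrow> int) \<Rightarrow> (nat \<Rightarrow> int) \<Rightarrow> bool) \<Rightarrow> (nat \<Rightarrow> nat \<Rightarrow> int) set" where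
  "indep_tuples p q N s R =
     {a \<in> padded_funs s (vecs q N) (\<lambda>_. 0). indep_mod p N s a \<and> (\<forall>i<s. \<forall>j<s. R (a i) (a j))}"

definition tuple_extensions ::
    "int \<Rightarrow> int \<Rightarrow> nat \<Rightarrow> nat \<Rightarrow> ((nat \<Rightarrow> int) \<Rightarrow> (nat \<Rightarrow> int) \<Rightarrow> bool) \<Rightarrow> (nat \<Rightarrow> nat \<Rightarrow> int)
      \<Rightarrow> (nat \<Rightarrow> int) set" where
  "tuple_extensions p q N s R a =
     {b \<in> vecs q N. (\<forall>i<s. R (a i) b) \<and> indep_mod p N (Suc s) (a(s := b))}"

lemma finite_indep_tuples: "finite (indep_tuples p q N s R)"
  using finite_padded_funs[OF finite_vecs] by (simp add: indep_tuples_def)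

lemma indep_tuples_0: "indep_tuples p q N 0 R = {\<lambda>_ _. 0}"
  by (auto simp: indep_tuples_def padded_funs_def indep_mod_def)

lemma indep_tuples_Suc:
  assumes sym: "\<And>u v. R u v \<Longrightarrow> R v u" and refl: "\<And>u. R u u"
  shows "indep_tuples p q N (Suc s) R
    = (\<lambda>(a, b). a(s := b)) ` Sigma (indep_tuples p q N s R) (tuple_extensions p q N s R)"
proof (intro equalityI subsetI)
  fix a' assume a': "a' \<in> indep_tuples p q N (Suc s) R"
  define a where "a = a'(s := (\<lambda>_. 0))"
  have ind: "indep_mod p N (Suc s) a'" using a' by (simp add: indep_tuples_def)
  then have "indep_mod p N s a"
    using indep_mod_prefix indep_mod_cong[of s a a'] by (simp add: a_def)
  then have "a \<in> indep_tuples p q N s R"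
    using a' by (auto simp: indep_tuples_def padded_funs_def a_def)
  moreover have "a' s \<in> tuple_extensions p q N s R a"
    using a' ind by (auto simp: indep_tuples_def padded_funs_def tuple_extensions_def a_def)
  ultimately have "(a, a' s) \<in> Sigma (indep_tuples p q N s R) (tuple_extensions p q N s R)" by simp
  moreover have "a' = (\<lambda>(a, b). a(s := b)) (a, a' s)" by (simp add: a_def)
  ultimately show "a' \<in> (\<lambda>(a, b). a(s := b)) ` Sigma (indep_tuples p q N s R) (tuple_extensions p q N s R)"
    by (rule rev_image_eqI)
next
  fix a' assume "a' \<in> (\<lambda>(a, b). a(s := b)) ` Sigma (indep_tuples p q N s R) (tuple_extensions p q N s R)"
  then obtain a b where a: "a \<in> indep_tuples p q N s R" and b: "b \<in> tuple_extensions p q N s R a"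
    and a': "a' = a(s := b)" by force
  have "\<forall>i<Suc s. \<forall>j<Suc s. R (a' i) (a' j)"
  proof (intro allI impI)
    fix i j assume "i < Suc s" "j < Suc s"
    then show "R (a' i) (a' j)"
      using a b sym refl
      by (cases "i = s"; cases "j = s") (auto simp: a' indep_tuples_def tuple_extensions_def)
  qed
  moreover have "a' \<in> padded_funs (Suc s) (vecs q N) (\<lambda>_. 0)"
    using a b by (auto simp: a' indep_tuples_def tuple_extensions_def padded_funs_def less_Suc_eq)
  moreover have "indep_mod p N (Suc s) a'" using b by (simp add: a' tuple_extensions_def)
  ultimately show "a' \<in> indep_tuples p q N (Suc s) R" by (simp add: indep_tuples_def)
qed

lemma card_fun_upd_Sigma:
  assumes "finite A" and "\<forall>a\<in>A. a s = z" and "\<forall>a\<in>A. finite (B a)"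
  shows "card ((\<lambda>(a, b). a(s := b)) ` Sigma A B) = (\<Sum>a\<in>A. card (B a))"
proof -
  have "inj_on (\<lambda>(a, b). a(s := b)) (Sigma A B)"
  proof (rule inj_onI, clarify)
    fix a b a' b' assume "a \<in> A" "a' \<in> A" and e: "a(s := b) = a'(s := b')"
    then have "a s = a' s" using assms(2) by metis
    moreover have "a i = a' i" if "i \<noteq> s" for i using fun_cong[OF e, of i] that by simp
    ultimately have "a = a'" by (metis ext)
    moreover have "b = b'" using fun_cong[OF e, of s] by simp
    ultimately show "a = a' \<and> b = b'" by simp
  qed
  then show ?thesis using assms by (simp add: card_image card_SigmaI)
qed

lemma card_indep_tuples:
  assumes sym: "\<And>u v. R u v \<Longrightarrow> R v u" and refl: "\<And>u. R u u"
    and ext: "\<And>j a. j < s \<Longrightarrow> a \<in> indep_tuples p q N j R \<Longrightarrow> card (tuple_extensions p q N j R a) = E j"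
  shows "card (indep_tuples p q N s R) = (\<Prod>j<s. E j)"
  using ext
proof (induction s)
  case 0
  then show ?case by (simp add: indep_tuples_0)
next
  case (Suc s)
  let ?T = "indep_tuples p q N s R"
  have "card (indep_tuples p q N (Suc s) R)
      = card ((\<lambda>(a, b). a(s := b)) ` Sigma ?T (tuple_extensions p q N s R))"
    by (simp only: indep_tuples_Suc[OF sym refl])
  also have "\<dots> = (\<Sum>a\<in>?T. card (tuple_extensions p q N s R a))"
  proof (rule card_fun_upd_Sigma[OF finite_indep_tuples])
    show "\<forall>a\<in>?T. a s = (\<lambda>_. 0)" by (simp add: indep_tuples_def padded_funs_def)
    show "\<forall>a\<in>?T. finite (tuple_extensions p q N s R a)"
      using finite_vecs by (simp add: tuple_extensions_def)
  qed
  also have "\<dots> = card ?T * E s" using Suc.prems by simp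
  finally show ?case using Suc by simp
qed

abbreviation isotropic_tuples :: "int \<Rightarrow> int \<Rightarrow> nat \<Rightarrow> nat \<Rightarrow> (nat \<Rightarrow> nat \<Rightarrow> int) set" where
  "isotropic_tuples p q n s \<equiv> indep_tuples p q (2*n) s (symp_orth n q)"

abbreviation basis_tuples :: "int \<Rightarrow> int \<Rightarrow> nat \<Rightarrow> (nat \<Rightarrow> nat \<Rightarrow> int) set" where
  "basis_tuples p q r \<equiv> indep_tuples p q r r (\<lambda>_ _. True)"

lemma card_isotropic_tuples:
  assumes p: "prime p" and m: "m > 0" and "s \<le> 2*n"
  shows "card (isotropic_tuples p (p^m) n s)
    = (\<Prod>j<s. nat (p^m) ^ (2*n - j) - nat p ^ j * nat (p^(m-1)) ^ (2*n - j))"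
proof (rule card_indep_tuples[OF symp_orth_sym symp_orth_refl])
  fix j a assume "j < s" and a: "a \<in> indep_tuples p (p^m) (2*n) j (symp_orth n (p^m))"
  let ?F = "\<lambda>i. symp_dual n (a i)"
  have ind: "indep_mod p (2*n) j a" using a by (simp add: indep_tuples_def)
  have "\<forall>i<j. a i \<in> ker_mod (p^m) (2*n) j ?F"
    using a by (auto simp: indep_tuples_def padded_funs_def ker_mod_def symp_orth_def symp_eq_dot)
  moreover have "tuple_extensions p (p^m) (2*n) j (symp_orth n (p^m)) a
      = {b \<in> ker_mod (p^m) (2*n) j ?F. indep_mod p (2*n) (Suc j) (a(j := b))}"
    by (auto simp: tuple_extensions_def ker_mod_def symp_orth_def symp_eq_dot)
  ultimately show "card (tuple_extensions p (p^m) (2*n) j (symp_orth n (p^m)) a)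
      = nat (p^m) ^ (2*n - j) - nat p ^ j * nat (p^(m-1)) ^ (2*n - j)"
    using card_indep_extensions[OF p m indep_mod_symp_dual[OF ind]] \<open>j < s\<close> \<open>s \<le> 2*n\<close> ind
    by simp
qed

lemma card_basis_tuples:
  assumes p: "prime p" and m: "m > 0"
  shows "card (basis_tuples p (p^m) r) = (\<Prod>j<r. nat (p^m) ^ r - nat p ^ j * nat (p^(m-1)) ^ r)"
proof (rule card_indep_tuples)
  fix j a assume a: "a \<in> indep_tuples p (p^m) r j (\<lambda>_ _. True)"
  let ?F = "\<lambda>_ _. 0 :: int"
  have "indep_mod p r 0 ?F" by (simp add: indep_mod_def)
  moreover have "\<forall>i<j. a i \<in> ker_mod (p^m) r 0 ?F" and ind: "indep_mod p r j a"
    using a by (auto simp: indep_tuples_def padded_funs_def ker_mod_def)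
  moreover have "tuple_extensions p (p^m) r j (\<lambda>_ _. True) a
      = {b \<in> ker_mod (p^m) r 0 ?F. indep_mod p r (Suc j) (a(j := b))}"
    by (simp add: tuple_extensions_def ker_mod_def)
  ultimately show "card (tuple_extensions p (p^m) r j (\<lambda>_ _. True) a)
      = nat (p^m) ^ r - nat p ^ j * nat (p^(m-1)) ^ r"
    using card_indep_extensions[OF p m, of r 0 ?F] by simp
qed auto

lemma unit_tuple_mem_basis_tuples:
  assumes "prime p" and "m > 0"
  shows "(\<lambda>i l. if i = l \<and> i < r then 1 else 0) \<in> basis_tuples p (p^m) r"
proof -
  have "p^m > 1" using assms by (simp add: prime_gt_1_int)
  moreover have "(\<Sum>i<r. c i * (if i = l \<and> i < r then 1 else 0)) = c l" if "l < r" for c :: "nat \<Rightarrow> int" and l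
    using that by (simp add: if_distrib[of "\<lambda>x. _ * x"] sum.delta' cong: if_cong)
  ultimately show ?thesis
    by (auto simp: indep_tuples_def padded_funs_def vecs_iff indep_mod_def)
qed

lemma card_basis_tuples_pos: "prime p \<Longrightarrow> m > 0 \<Longrightarrow> card (basis_tuples p (p^m) r) > 0"
  using unit_tuple_mem_basis_tuples finite_indep_tuples card_gt_0_iff by blast

section \<open>Stabilizer codes and their generating tuples\<close>

lemma lin_indep_iff_indep_mod: "lin_indep d n r a \<longleftrightarrow> indep_mod (int d) (2*n) r a"
proof -
  have "lincomb d n r a x = (\<lambda>_. 0) \<longleftrightarrow> (\<forall>l<2*n. (\<Sum>j<r. x j * a j l) mod int d = 0)" for x
    unfolding lincomb_def fun_eq_iff by auto
  then show ?thesis unfolding lin_indep_def indep_mod_def by simp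
qed

lemma lincomb_in_vecs: "d > 0 \<Longrightarrow> lincomb d n r a x \<in> vecs (int d) (2*n)"
  by (auto simp: lincomb_def vecs_iff)

lemma lincomb_cong_coeffs:
  assumes "\<forall>j<r. x j mod int d = y j mod int d"
  shows "lincomb d n r a x = lincomb d n r a y"
proof
  fix l
  have "(\<Sum>j<r. x j * a j l) mod int d = (\<Sum>j<r. y j * a j l) mod int d"
    by (rule sum_mod_cong) (use assms in \<open>auto intro: mod_mult_cong\<close>)
  then show "lincomb d n r a x l = lincomb d n r a y l" by (simp add: lincomb_def)
qed

lemma lincomb_cong_vectors:
  assumes "\<forall>j<r. a j = b j"
  shows "lincomb d n r a x = lincomb d n r b x"
proof
  fix l
  have "(\<Sum>j<r. x j * a j l) = (\<Sum>j<r. x j * b j l)" using assms by (intro sum.cong) auto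
  then show "lincomb d n r a x l = lincomb d n r b x l" by (simp add: lincomb_def)
qed

lemma zspan_cong: "\<forall>j<r. a j = b j \<Longrightarrow> zspan d n r a = zspan d n r b"
  using lincomb_cong_vectors[of r a b d n] by (simp add: zspan_def)

lemma lincomb_eq_imp_coeffs_eq:
  assumes "lin_indep d n r a" and "lincomb d n r a x = lincomb d n r a y"
  shows "\<forall>j<r. x j mod int d = y j mod int d"
proof (rule indep_mod_coeffs_unique)
  show "indep_mod (int d) (2*n) r a" using assms(1) by (simp add: lin_indep_iff_indep_mod)
  show "\<forall>l<2*n. (\<Sum>j<r. x j * a j l) mod int d = (\<Sum>j<r. y j * a j l) mod int d"
  proof (intro allI impI)
    fix l assume "l < 2*n"
    then show "(\<Sum>j<r. x j * a j l) mod int d = (\<Sum>j<r. y j * a j l) mod int d"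
      using fun_cong[OF assms(2), of l] by (simp add: lincomb_def)
  qed
qed

lemma zspan_eq_image: "d > 0 \<Longrightarrow> zspan d n r a = lincomb d n r a ` vecs (int d) r"
proof (intro equalityI subsetI)
  fix v assume "d > 0" "v \<in> zspan d n r a"
  then obtain x where v: "v = lincomb d n r a x" by (auto simp: zspan_def)
  also have "\<dots> = lincomb d n r a (vec_mod (int d) r x)"
    by (rule lincomb_cong_coeffs) (simp add: vec_mod_def)
  finally show "v \<in> lincomb d n r a ` vecs (int d) r"
    using vec_mod_in_vecs \<open>d > 0\<close> by simp
qed (auto simp: zspan_def)

lemma finite_zspan: "d > 0 \<Longrightarrow> finite (zspan d n r a)"
  by (simp add: zspan_eq_image finite_vecs)

lemma card_zspan:
  assumes "d > 0" and "lin_indep d n r a"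
  shows "card (zspan d n r a) = d ^ r"
proof -
  have "inj_on (lincomb d n r a) (vecs (int d) r)"
  proof (rule inj_onI)
    fix x y assume x: "x \<in> vecs (int d) r" and y: "y \<in> vecs (int d) r"
      and "lincomb d n r a x = lincomb d n r a y"
    have "\<forall>j<r. x j mod int d = y j mod int d"
      by (rule lincomb_eq_imp_coeffs_eq[OF assms(2)]) fact
    then show "x = y" using vecs_mod_inj[OF x y] by simp
  qed
  then show ?thesis by (simp add: zspan_eq_image[OF assms(1)] card_image card_vecs)
qed

lemma lincomb_lincomb:
  "lincomb d n r (\<lambda>i. lincomb d n r a (M i)) x = lincomb d n r a (\<lambda>j. \<Sum>i<r. x i * M i j)"
proof
  fix l
  show "lincomb d n r (\<lambda>i. lincomb d n r a (M i)) x l = lincomb d n r a (\<lambda>j. \<Sum>i<r. x i * M i j) l"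
  proof (cases "l < 2*n")
    case True
    have "(\<Sum>i<r. x i * lincomb d n r a (M i) l) mod int d
        = (\<Sum>i<r. x i * (\<Sum>j<r. M i j * a j l)) mod int d"
      by (rule sum_mod_cong) (use True in \<open>auto simp: lincomb_def intro: mod_mult_cong\<close>)
    also have "(\<Sum>i<r. x i * (\<Sum>j<r. M i j * a j l)) = (\<Sum>j<r. (\<Sum>i<r. x i * M i j) * a j l)"
      by (rule sum_mult_sum_swap)
    finally show ?thesis using True by (simp add: lincomb_def)
  qed (simp add: lincomb_def)
qed

lemma lincomb_lincomb_mod:
  assumes "p dvd int d" and "l < 2*n"
  shows "(\<Sum>i<r. c i * lincomb d n r a (M i) l) mod p = (\<Sum>j<r. (\<Sum>i<r. c i * M i j) * a j l) mod p"
proof -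
  have "(\<Sum>i<r. c i * lincomb d n r a (M i) l) mod p = (\<Sum>i<r. c i * (\<Sum>j<r. M i j * a j l)) mod p"
    using assms by (intro sum_mod_cong ballI mod_mult_cong) (simp_all add: lincomb_def mod_mod_cancel)
  also have "(\<Sum>i<r. c i * (\<Sum>j<r. M i j * a j l)) = (\<Sum>j<r. (\<Sum>i<r. c i * M i j) * a j l)"
    by (rule sum_mult_sum_swap)
  finally show ?thesis .
qed

lemma lincomb_unit:
  assumes "a i \<in> vecs (int d) (2*n)" and "i < r"
  shows "lincomb d n r a (\<lambda>j. if j = i then 1 else 0) = a i"
proof
  fix l
  have "(\<Sum>j<r. (if j = i then 1 else 0) * a j l) = a i l"
    using assms(2) by (simp add: if_distrib[of "\<lambda>x. x * _"] sum.delta cong: if_cong)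
  then show "lincomb d n r a (\<lambda>j. if j = i then 1 else 0) l = a i l"
    using assms(1) by (cases "l < 2*n") (simp_all add: lincomb_def vecs_iff)
qed

lemma symp_lincomb:
  assumes "\<forall>i<r. \<forall>j<r. symp n (a i) (a j) mod int d = 0"
  shows "symp n (lincomb d n r a x) (lincomb d n r a y) mod int d = 0"
proof -
  define S where "S = (\<lambda>x l. \<Sum>j<r. x j * a j l)"
  have "symp n (lincomb d n r a x) (lincomb d n r a y) mod int d = symp n (S x) (S y) mod int d"
    by (rule symp_mod_cong) (auto simp: lincomb_def S_def)
  also have "symp n (S x) (S y) = (\<Sum>i<r. x i * (\<Sum>j<r. y j * symp n (a i) (a j)))"
    unfolding symp_eq_dot S_def symp_dual_sum dot_sum_left dot_sum_right by simp
  also have "\<dots> mod int d = 0"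
  proof -
    have "int d dvd (\<Sum>i<r. x i * (\<Sum>j<r. y j * symp n (a i) (a j)))"
      using assms by (intro dvd_sum dvd_mult) (simp add: dvd_eq_mod_eq_0)
    then show ?thesis by simp
  qed
  finally show ?thesis .
qed

definition recombine :: "nat \<Rightarrow> nat \<Rightarrow> nat \<Rightarrow> (nat \<Rightarrow> nat \<Rightarrow> int) \<Rightarrow> (nat \<Rightarrow> nat \<Rightarrow> int) \<Rightarrow> nat \<Rightarrow> nat \<Rightarrow> int" where
  "recombine d n r a M = (\<lambda>i. if i < r then lincomb d n r a (M i) else (\<lambda>_. 0))"

context
  fixes P :: int and m d :: nat
  assumes P: "prime P" and m: "m > 0" and d: "int d = P^m"
begin

lemma modulus_pos: "d > 0"
  using d P by (metis of_nat_0_less_iff prime_gt_0_int zero_less_power)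

lemma prime_dvd_modulus: "P dvd int d"
  using d m by simp

lemma lin_indep_iff_indep_mod_prime: "lin_indep d n r a \<longleftrightarrow> indep_mod P (2*n) r a"
  unfolding lin_indep_iff_indep_mod d using indep_mod_prime_power_iff[OF P m] .

lemma stab_codes_eq_image:
  "stab_codes d n k = zspan d n (n-k) ` isotropic_tuples P (int d) n (n-k)"
proof (intro equalityI subsetI)
  let ?r = "n - k"
  fix C assume "C \<in> stab_codes d n k"
  then obtain a where C: "C = zspan d n ?r a" and av: "\<forall>j<?r. a j \<in> zvecs d n"
    and li: "lin_indep d n ?r a" and ao: "\<forall>i<?r. \<forall>j<?r. symp n (a i) (a j) mod int d = 0"
    unfolding stab_codes_def by blast
  define a' where "a' = (\<lambda>j. if j < ?r then a j else (\<lambda>_. 0))"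
  have eq: "\<forall>j<?r. a' j = a j" by (simp add: a'_def)
  have "indep_mod P (2*n) ?r a'"
    using li indep_mod_cong[OF eq] by (simp add: lin_indep_iff_indep_mod_prime)
  then have "a' \<in> isotropic_tuples P (int d) n ?r"
    using av ao by (simp add: indep_tuples_def padded_funs_def symp_orth_def a'_def zvecs_eq_vecs)
  moreover have "C = zspan d n ?r a'" unfolding C using eq by (simp add: zspan_cong)
  ultimately show "C \<in> zspan d n ?r ` isotropic_tuples P (int d) n ?r" by blast
next
  fix C assume "C \<in> zspan d n (n-k) ` isotropic_tuples P (int d) n (n-k)"
  then obtain a where "C = zspan d n (n-k) a" and "a \<in> isotropic_tuples P (int d) n (n-k)"
    by blast
  then show "C \<in> stab_codes d n k"
    unfolding stab_codes_def
    by (auto simp: indep_tuples_def padded_funs_def symp_orth_def zvecs_eq_vecs lin_indep_iff_indep_mod_prime)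
qed

lemma indep_mod_recombine_iff:
  assumes a0: "indep_mod P (2*n) r a0"
  shows "indep_mod P (2*n) r (recombine d n r a0 M) \<longleftrightarrow> indep_mod P r r M"
proof -
  have "(\<forall>l<2*n. (\<Sum>i<r. c i * recombine d n r a0 M i l) mod P = 0)
      \<longleftrightarrow> (\<forall>j<r. (\<Sum>i<r. c i * M i j) mod P = 0)" for c
  proof -
    have "(\<Sum>i<r. c i * recombine d n r a0 M i l) mod P = (\<Sum>j<r. (\<Sum>i<r. c i * M i j) * a0 j l) mod P"
      if "l < 2*n" for l
    proof -
      have "(\<Sum>i<r. c i * recombine d n r a0 M i l) = (\<Sum>i<r. c i * lincomb d n r a0 (M i) l)"
        by (intro sum.cong) (auto simp: recombine_def)
      then show ?thesis using lincomb_lincomb_mod[OF prime_dvd_modulus that] by simp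
    qed
    moreover have "(\<forall>l<2*n. (\<Sum>j<r. (\<Sum>i<r. c i * M i j) * a0 j l) mod P = 0)
        \<longleftrightarrow> (\<forall>j<r. (\<Sum>i<r. c i * M i j) mod P = 0)"
    proof
      assume "\<forall>l<2*n. (\<Sum>j<r. (\<Sum>i<r. c i * M i j) * a0 j l) mod P = 0"
      then show "\<forall>j<r. (\<Sum>i<r. c i * M i j) mod P = 0"
        using indep_modD[OF a0, where c = "\<lambda>j. \<Sum>i<r. c i * M i j"] by simp
    next
      assume H: "\<forall>j<r. (\<Sum>i<r. c i * M i j) mod P = 0"
      have "P dvd (\<Sum>j<r. (\<Sum>i<r. c i * M i j) * a0 j l)" for l
      proof (rule dvd_sum)
        fix j assume "j \<in> {..<r}"
        then have "P dvd (\<Sum>i<r. c i * M i j)" using H by (simp add: dvd_eq_mod_eq_0)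
        then show "P dvd (\<Sum>i<r. c i * M i j) * a0 j l" by simp
      qed
      then show "\<forall>l<2*n. (\<Sum>j<r. (\<Sum>i<r. c i * M i j) * a0 j l) mod P = 0" by simp
    qed
    ultimately show ?thesis by simp
  qed
  then show ?thesis unfolding indep_mod_def by simp
qed

lemma recombine_isotropic:
  assumes a0: "a0 \<in> isotropic_tuples P (int d) n r" and M: "M \<in> basis_tuples P (int d) r"
  shows "recombine d n r a0 M \<in> isotropic_tuples P (int d) n r"
proof -
  have a0_indep: "indep_mod P (2*n) r a0"
    and a0_orth: "\<forall>i<r. \<forall>j<r. symp n (a0 i) (a0 j) mod int d = 0"
    using a0 by (auto simp: indep_tuples_def symp_orth_def)
  have "indep_mod P (2*n) r (recombine d n r a0 M)"
    using M by (simp add: indep_tuples_def indep_mod_recombine_iff[OF a0_indep])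
  moreover have "\<forall>i<r. \<forall>j<r. symp n (recombine d n r a0 M i) (recombine d n r a0 M j) mod int d = 0"
    using symp_lincomb[OF a0_orth] by (simp add: recombine_def)
  ultimately show ?thesis
    using lincomb_in_vecs[OF modulus_pos]
    by (simp add: indep_tuples_def padded_funs_def symp_orth_def recombine_def)
qed

lemma zspan_recombine:
  assumes a0: "a0 \<in> isotropic_tuples P (int d) n r" and M: "M \<in> basis_tuples P (int d) r"
  shows "zspan d n r (recombine d n r a0 M) = zspan d n r a0"
proof (rule card_subset_eq)
  show "finite (zspan d n r a0)" by (rule finite_zspan[OF modulus_pos])
  show "zspan d n r (recombine d n r a0 M) \<subseteq> zspan d n r a0"
  proof
    fix v assume "v \<in> zspan d n r (recombine d n r a0 M)"
    then obtain x where "v = lincomb d n r (recombine d n r a0 M) x" by (auto simp: zspan_def)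
    also have "\<dots> = lincomb d n r (\<lambda>i. lincomb d n r a0 (M i)) x"
      by (rule lincomb_cong_vectors) (simp add: recombine_def)
    also have "\<dots> = lincomb d n r a0 (\<lambda>j. \<Sum>i<r. x i * M i j)" by (rule lincomb_lincomb)
    finally show "v \<in> zspan d n r a0" by (auto simp: zspan_def)
  qed
  have "lin_indep d n r a" if "a \<in> isotropic_tuples P (int d) n r" for a
    using that by (simp add: indep_tuples_def lin_indep_iff_indep_mod_prime)
  then show "card (zspan d n r (recombine d n r a0 M)) = card (zspan d n r a0)"
    using recombine_isotropic[OF a0 M] a0 by (simp add: card_zspan[OF modulus_pos])
qed

lemma inj_on_recombine:
  assumes a0: "a0 \<in> isotropic_tuples P (int d) n r"
  shows "inj_on (recombine d n r a0) (basis_tuples P (int d) r)"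
proof (rule inj_onI)
  fix M M' assume M: "M \<in> basis_tuples P (int d) r" and M': "M' \<in> basis_tuples P (int d) r"
    and eq: "recombine d n r a0 M = recombine d n r a0 M'"
  have li: "lin_indep d n r a0" using a0 by (simp add: indep_tuples_def lin_indep_iff_indep_mod_prime)
  show "M = M'"
  proof
    fix i show "M i = M' i"
    proof (cases "i < r")
      case True
      then have "lincomb d n r a0 (M i) = lincomb d n r a0 (M' i)"
        using fun_cong[OF eq, of i] by (simp add: recombine_def)
      then have "\<forall>j<r. M i j mod int d = M' i j mod int d" by (rule lincomb_eq_imp_coeffs_eq[OF li])
      moreover have "M i \<in> vecs (int d) r" "M' i \<in> vecs (int d) r"
        using M M' True by (simp_all add: indep_tuples_def padded_funs_def)
      ultimately show ?thesis using vecs_mod_inj by blast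
    next
      case False
      then show ?thesis using M M' by (simp add: indep_tuples_def padded_funs_def)
    qed
  qed
qed

lemma recombine_onto:
  assumes a0: "a0 \<in> isotropic_tuples P (int d) n r" and a: "a \<in> isotropic_tuples P (int d) n r"
    and span: "zspan d n r a = zspan d n r a0"
  shows "\<exists>M \<in> basis_tuples P (int d) r. recombine d n r a0 M = a"
proof -
  have a_vecs: "\<forall>j<r. a j \<in> vecs (int d) (2*n)" and a_zero: "\<forall>j\<ge>r. a j = (\<lambda>_. 0)"
    and a_indep: "indep_mod P (2*n) r a"
    using a by (auto simp: indep_tuples_def padded_funs_def)
  have "\<exists>x. a i = lincomb d n r a0 x" if "i < r" for i
  proof -
    have "a i = lincomb d n r a (\<lambda>j. if j = i then 1 else 0)"
      using lincomb_unit[of a i d n r] a_vecs that by simp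
    then have "a i \<in> zspan d n r a" unfolding zspan_def by blast
    then show ?thesis using span by (auto simp: zspan_def)
  qed
  then obtain X where X: "\<forall>i<r. a i = lincomb d n r a0 (X i)" by metis
  define M where "M = (\<lambda>i. if i < r then vec_mod (int d) r (X i) else (\<lambda>_. 0))"
  have lincomb_M: "lincomb d n r a0 (M i) = a i" if "i < r" for i
  proof -
    have "lincomb d n r a0 (M i) = lincomb d n r a0 (X i)"
      using that by (simp add: M_def) (rule lincomb_cong_coeffs, simp add: vec_mod_def)
    then show ?thesis using X that by simp
  qed
  have recombine_M: "recombine d n r a0 M = a"
  proof
    fix i show "recombine d n r a0 M i = a i"
      using lincomb_M a_zero by (cases "i < r") (auto simp: recombine_def)
  qed
  have "indep_mod P (2*n) r a0" using a0 by (simp add: indep_tuples_def)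
  then have "indep_mod P r r M"
    using indep_mod_recombine_iff[of n r a0 M] a_indep recombine_M by simp
  then have "M \<in> basis_tuples P (int d) r"
    using vec_mod_in_vecs[of "int d"] modulus_pos by (simp add: indep_tuples_def padded_funs_def M_def)
  with recombine_M show ?thesis by blast
qed

lemma card_tuples_with_span:
  assumes a0: "a0 \<in> isotropic_tuples P (int d) n r"
  shows "card {a \<in> isotropic_tuples P (int d) n r. zspan d n r a = zspan d n r a0}
    = card (basis_tuples P (int d) r)"
proof -
  have "recombine d n r a0 ` basis_tuples P (int d) r
      = {a \<in> isotropic_tuples P (int d) n r. zspan d n r a = zspan d n r a0}"
    using recombine_isotropic[OF a0] zspan_recombine[OF a0] recombine_onto[OF a0] by blast
  then show ?thesis using card_image[OF inj_on_recombine[OF a0]] by simp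
qed

lemma card_isotropic_tuples_eq_codes_times_bases:
  "card (isotropic_tuples P (int d) n r)
    = card (zspan d n r ` isotropic_tuples P (int d) n r) * card (basis_tuples P (int d) r)"
proof -
  let ?T = "isotropic_tuples P (int d) n r"
  let ?fibre = "\<lambda>C. {a \<in> ?T. zspan d n r a = C}"
  have "card ?T = card (\<Union>C\<in>zspan d n r ` ?T. ?fibre C)" by (rule arg_cong[where f = card]) blast
  also have "\<dots> = (\<Sum>C\<in>zspan d n r ` ?T. card (?fibre C))"
    by (rule card_UN_disjoint) (auto simp: finite_indep_tuples)
  also have "\<dots> = (\<Sum>C\<in>zspan d n r ` ?T. card (basis_tuples P (int d) r))"
    using card_tuples_with_span by (intro sum.cong) auto
  finally show ?thesis by simp
qed

end

section \<open>The closed formula\<close>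

lemma sum_isotropic_exponents:
  fixes r k :: nat
  shows "(\<Sum>j<r. 2*(r+k) - j) = (r * ((r+k) + 3*k + 1)) div 2 + r * r"
proof -
  have twice: "r \<le> n \<Longrightarrow> 2 * (\<Sum>j<r. 2*n - j) + r*r = 4*n*r + r" for n
  proof (induction r)
    case (Suc r)
    then have IH: "2 * (\<Sum>j<r. 2*n - j) + r*r = 4*n*r + r" and "r < n" by auto
    then obtain t where t: "2*n - r = t" "t + r = 2*n" by auto
    have "2 * (\<Sum>j<Suc r. 2*n - j) + Suc r * Suc r = 2 * (\<Sum>j<r. 2*n - j) + r*r + 2*t + 2*r + 1"
      using t by (simp add: algebra_simps)
    also have "\<dots> = 4*n*Suc r + Suc r" using IH t by (simp add: algebra_simps)
    finally show ?case .
  qed simp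
  have "even (r * ((r+k) + 3*k + 1))" by (cases "even r") auto
  then have "2 * ((r * ((r+k) + 3*k + 1)) div 2) = r * ((r+k) + 3*k + 1)" by simp
  then show ?thesis using twice[of "r+k"] by (simp add: algebra_simps)
qed

lemma of_nat_count_factor:
  fixes p m N j :: nat
  assumes "p \<ge> 1" and "m \<ge> 1" and "j \<le> N"
  shows "real ((p^m)^N - p^j * (p^(m-1))^N) = (real p ^ (m-1))^N * (real p ^ N - real p ^ j)"
proof -
  have "p^m = p^(m-1) * p" using assms(2) by (simp add: power_eq_if)
  then have pm: "(p^m)^N = (p^(m-1))^N * p^N" by (simp add: power_mult_distrib)
  have "p^j \<le> p^N" using assms by (simp add: power_increasing)
  then have "p^j * (p^(m-1))^N \<le> (p^m)^N" unfolding pm by (simp add: mult.commute)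
  then have "real ((p^m)^N - p^j * (p^(m-1))^N) = real ((p^m)^N) - real (p^j * (p^(m-1))^N)"
    by (simp add: of_nat_diff)
  also have "\<dots> = (real p ^ (m-1))^N * (real p ^ N - real p ^ j)"
    unfolding pm by (simp add: algebra_simps power_mult_distrib)
  finally show ?thesis .
qed

lemma isotropic_factor_split:
  fixes x :: real
  assumes "x \<ge> 2" and "j < r" and "r \<le> n"
  shows "x^(2*n - j) - x^j = (x^(n-j) - 1) / (x^(r-j) - 1) * (x^(n-j) + 1) * (x^r - x^j)"
proof -
  have "x^1 \<le> x^(r-j)" using assms by (intro power_increasing) auto
  then have nz: "x^(r-j) - 1 \<noteq> 0" using assms(1) by simp
  have "x^r = x^j * x^(r-j)" using assms by (simp flip: power_add)
  moreover have "2*n - j = j + ((n-j) + (n-j))" using assms by simp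
  then have "x^(2*n - j) = x^j * (x^(n-j) * x^(n-j))" by (simp only: power_add)
  ultimately show ?thesis using nz by (simp add: field_simps)
qed

lemma isotropic_count_over_basis_count:
  fixes p m r k :: nat
  assumes p: "p \<ge> 2" and m: "m \<ge> 1"
  shows "real (\<Prod>j<r. (p^m)^(2*(r+k) - j) - p^j * (p^(m-1))^(2*(r+k) - j)) =
    (real p ^ (m-1)) ^ ((r * ((r+k) + 3*k + 1)) div 2)
    * (\<Prod>j<r. (real p ^ ((r+k) - j) - 1) / (real p ^ (r-j) - 1))
    * (\<Prod>j<r. real p ^ ((r+k) - j) + 1) * real (\<Prod>j<r. (p^m)^r - p^j * (p^(m-1))^r)"
proof -
  let ?x = "real p" and ?y = "real p ^ (m-1)" and ?n = "r + k"
  have iso: "real (\<Prod>j<r. (p^m)^(2*?n - j) - p^j * (p^(m-1))^(2*?n - j))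
      = (\<Prod>j<r. ?y^(2*?n - j) * (?x^(2*?n - j) - ?x^j))"
    unfolding of_nat_prod using p m by (intro prod.cong refl of_nat_count_factor) auto
  have basis: "real (\<Prod>j<r. (p^m)^r - p^j * (p^(m-1))^r) = (\<Prod>j<r. ?y^r * (?x^r - ?x^j))"
    unfolding of_nat_prod using p m by (intro prod.cong refl of_nat_count_factor) auto
  have "(\<Prod>j<r. ?y^(2*?n - j) * (?x^(2*?n - j) - ?x^j))
      = ?y^(\<Sum>j<r. 2*?n - j) * (\<Prod>j<r. ?x^(2*?n - j) - ?x^j)"
    by (simp add: prod.distrib power_sum)
  also have "?y^(\<Sum>j<r. 2*?n - j) = ?y^((r * (?n + 3*k + 1)) div 2) * ?y^(r*r)"
    by (simp only: sum_isotropic_exponents power_add)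
  also have "(\<Prod>j<r. ?x^(2*?n - j) - ?x^j)
      = (\<Prod>j<r. (?x^(?n-j) - 1) / (?x^(r-j) - 1) * (?x^(?n-j) + 1) * (?x^r - ?x^j))"
    using p by (intro prod.cong refl isotropic_factor_split) auto
  also have "\<dots> = (\<Prod>j<r. (?x^(?n-j) - 1) / (?x^(r-j) - 1)) * (\<Prod>j<r. ?x^(?n-j) + 1)
      * (\<Prod>j<r. ?x^r - ?x^j)"
    by (simp only: prod.distrib)
  also have "?y^(r*r) * (\<Prod>j<r. ?x^r - ?x^j) = (\<Prod>j<r. ?y^r * (?x^r - ?x^j))"
    by (simp add: prod.distrib power_mult)
  ultimately show ?thesis unfolding iso basis by (simp add: algebra_simps)
qed

theorem lemma2:
  fixes p m n k :: nat
  assumes "prime p" and "m \<ge> 1" and "n \<ge> 1" and "k < n"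
  shows "real (card (stab_codes (p ^ m) n k)) =
    (real p ^ (m - 1)) ^ (((n - k) * (n + 3 * k + 1)) div 2)
    * gauss_binom p n k * (\<Prod>j<n-k. (real p ^ (n - j) + 1))"
proof -
  define r where "r = n - k"
  have n: "n = r + k" using assms(4) by (simp add: r_def)
  have P: "prime (int p)" and m: "m > 0" and d: "int (p^m) = int p ^ m" and p2: "p \<ge> 2"
    using assms by (simp_all add: prime_ge_2_nat)
  have nat_p: "nat (int p ^ e) = p ^ e" for e by (simp add: nat_power_eq)
  let ?isotropic = "isotropic_tuples (int p) (int (p^m)) n r"
  let ?bases = "basis_tuples (int p) (int (p^m)) r"
  have isotropic: "card ?isotropic = (\<Prod>j<r. (p^m)^(2*n - j) - p^j * (p^(m-1))^(2*n - j))"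
    using card_isotropic_tuples[OF P m, of r n] n unfolding d by (simp add: nat_p)
  have bases: "card ?bases = (\<Prod>j<r. (p^m)^r - p^j * (p^(m-1))^r)"
    using card_basis_tuples[OF P m, of r] unfolding d by (simp add: nat_p)
  have "real (card (stab_codes (p^m) n k)) * real (card ?bases) = real (card ?isotropic)"
    using card_isotropic_tuples_eq_codes_times_bases[OF P m d, of n r]
      stab_codes_eq_image[OF P m d, of n k] by (simp add: r_def flip: of_nat_mult)
  also have "\<dots> = (real p ^ (m - 1)) ^ (((n - k) * (n + 3 * k + 1)) div 2)
      * gauss_binom p n k * (\<Prod>j<n-k. (real p ^ (n - j) + 1)) * real (card ?bases)"
    using isotropic_count_over_basis_count[OF p2 assms(2), of r k, folded n]
    unfolding isotropic bases gauss_binom_def r_def[symmetric] by simp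
  finally show ?thesis using card_basis_tuples_pos[OF P m, of r] unfolding d by simp
qed

end
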